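(* Let $\pi,\tau\in S_n$ with $d(\pi,\tau)=t$, let $\lambda=\lambda(\pi)$, $\mu=\lambda(\tau)$ (parts padded with zeros), and let $B$ be a block of the union of their diagrams. Then the number of cells of $B$ is at most $t$.
   Context: Permutations are written in one-line notation. For $\pi\in S_n$, $\lambda(\pi)$ denotes the shape of the tableaux associated with $\pi$ by the RSK correspondence; Young diagrams are sets of cells, with $\lambda_j$ cells in row $j$. The distance $d(\pi,\tau)$ is the least number of adjacent transpositions $(k,k+1)$ whose successive left multiplication transforms $\pi$ into $\tau$. Blocks: a row index $j$ is a $\lambda$-row if $\lambda_j>\mu_j$ and a $\mu$-row if $\mu_j>\lambda_j$. A $\lambda$-block is the set of cells of the diagram of $\lambda$ not in the diagram of $\mu$ lying in the rows of a maximal interval $I$ of consecutive row indices containing at least one $\lambda$-row and no $\mu$-row (i.e. a maximal run of consecutive maximal intervals of $\lambda$-rows, not separated by any $\mu$-row); $\mu$-blocks are defined symmetrically. The blocks are the $\lambda$-blocks and the $\mu$-blocks; together they partition the symmetric difference of the two diagrams. *)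

theory Defs
  imports Main
begin

definition is_perm :: "nat \<Rightarrow> nat list \<Rightarrow> bool" where
  "is_perm n w \<longleftrightarrow> length w = n \<and> distinct w \<and> set w = {1..n}"

text \<open>Schensted row insertion into a tableau given as list of rows (top row first).\<close>
fun row_ins :: "nat \<Rightarrow> nat list list \<Rightarrow> nat list list" where
  "row_ins x [] = [[x]]"
| "row_ins x (r # rs) =
     (let a = takeWhile (\<lambda>y. y < x) r; b = dropWhile (\<lambda>y. y < x) r in
      if b = [] then (a @ [x]) # rs
      else (a @ x # tl b) # row_ins (hd b) rs)"

definition rsk_P :: "nat list \<Rightarrow> nat list list" where
  "rsk_P w = foldl (\<lambda>T x. row_ins x T) [] w"

text \<open>Shape lambda(pi), rows indexed from 0, padded with zeros.\<close>
definition rsk_shape :: "nat list \<Rightarrow> nat \<Rightarrow> nat" where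
  "rsk_shape w j = (let P = rsk_P w in if j < length P then length (P ! j) else 0)"

text \<open>Left multiplication by the adjacent transposition (k,k+1): swaps the values k and k+1.\<close>
definition left_adj :: "nat \<Rightarrow> nat list \<Rightarrow> nat list" where
  "left_adj k w = map (\<lambda>v. if v = k then k + 1 else if v = k + 1 then k else v) w"

definition adj_step :: "nat \<Rightarrow> nat list \<Rightarrow> nat list \<Rightarrow> bool" where
  "adj_step n p q \<longleftrightarrow> (\<exists>k. 1 \<le> k \<and> k < n \<and> q = left_adj k p)"

definition perm_dist :: "nat \<Rightarrow> nat list \<Rightarrow> nat list \<Rightarrow> nat" where
  "perm_dist n p q = (LEAST m. (adj_step n ^^ m) p q)"

definition diagram :: "(nat \<Rightarrow> nat) \<Rightarrow> (nat \<times> nat) set" where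
  "diagram lam = {(j, c). c < lam j}"

definition row_interval :: "nat set \<Rightarrow> bool" where
  "row_interval I \<longleftrightarrow> (\<forall>a\<in>I. \<forall>c\<in>I. \<forall>b. a \<le> b \<and> b \<le> c \<longrightarrow> b \<in> I)"

definition lam_block :: "(nat \<Rightarrow> nat) \<Rightarrow> (nat \<Rightarrow> nat) \<Rightarrow> (nat \<times> nat) set \<Rightarrow> bool" where
  "lam_block lam mu B \<longleftrightarrow>
     (\<exists>I. row_interval I \<and> (\<exists>j\<in>I. mu j < lam j) \<and> (\<forall>j\<in>I. \<not> lam j < mu j) \<and>
          (\<forall>J. row_interval J \<and> I \<subseteq> J \<and> (\<forall>j\<in>J. \<not> lam j < mu j) \<longrightarrow> J = I) \<and>
          B = {(j, c) \<in> diagram lam - diagram mu. j \<in> I})"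

definition is_block :: "(nat \<Rightarrow> nat) \<Rightarrow> (nat \<Rightarrow> nat) \<Rightarrow> (nat \<times> nat) set \<Rightarrow> bool" where
  "is_block lam mu B \<longleftrightarrow> lam_block lam mu B \<or> lam_block mu lam B"

end

theory Submission
  imports Defs "HOL-Combinatorics.Transposition"
begin

text \<open>
  By Greene's theorem, \<open>\<lambda>\<^sub>1 + \<dots> + \<lambda>\<^sub>k\<close> for \<open>\<lambda> = \<lambda>(\<pi>)\<close> is the largest size of a union of
  \<open>k\<close> increasing subsequences of \<open>\<pi>\<close>: this maximum is invariant under Knuth moves, \<open>\<pi>\<close> is Knuth
  equivalent to the reading word of its insertion tableau, and there it is computed column by
  column. Exchanging the values \<open>v\<close> and \<open>v + 1\<close> changes every one of these maxima by at most one,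
  and all of them in the same direction. Hence each window sum \<open>\<lambda>\<^sub>a + \<dots> + \<lambda>\<^sub>b\<^sub>-\<^sub>1\<close> changes by
  at most one per adjacent transposition. A block fills the rows \<open>a, \<dots>, b - 1\<close>, on which one shape
  dominates the other, so its size is the difference of two window sums, hence at most \<open>t\<close>.
\<close>

section \<open>Unions of increasing subsequences\<close>

text \<open>\<open>(S, f)\<close> is a union of \<open>k\<close> increasing subsequences of \<open>w\<close>: the positions \<open>S\<close> are coloured by
  \<open>f\<close> with colours below \<open>k\<close>, and every colour class is increasing.\<close>

definition incr_family :: "nat list \<Rightarrow> nat \<Rightarrow> nat set \<Rightarrow> (nat \<Rightarrow> nat) \<Rightarrow> bool" where
  "incr_family w k S f \<longleftrightarrow> S \<subseteq> {..<length w} \<and> (\<forall>i\<in>S. f i < k) \<and>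
     (\<forall>i\<in>S. \<forall>j\<in>S. i < j \<and> f i = f j \<longrightarrow> w ! i < w ! j)"

definition has_incr_family :: "nat list \<Rightarrow> nat \<Rightarrow> nat \<Rightarrow> bool" where
  "has_incr_family w k m \<longleftrightarrow> (\<exists>S f. incr_family w k S f \<and> card S = m)"

definition same_colour :: "nat set \<Rightarrow> (nat \<Rightarrow> nat) \<Rightarrow> nat \<Rightarrow> nat \<Rightarrow> bool" where
  "same_colour S f i j \<longleftrightarrow> i \<in> S \<and> j \<in> S \<and> f i = f j"

lemma incr_familyD:
  assumes "incr_family w k S f"
  shows "S \<subseteq> {..<length w}" "\<And>i. i \<in> S \<Longrightarrow> f i < k"
    "\<And>i j. i \<in> S \<Longrightarrow> j \<in> S \<Longrightarrow> i < j \<Longrightarrow> f i = f j \<Longrightarrow> w ! i < w ! j"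
  using assms unfolding incr_family_def by blast+

lemma incr_family_finite: "incr_family w k S f \<Longrightarrow> finite S"
  by (rule finite_subset[OF incr_familyD(1)]) simp_all

lemma incr_family_subset: "incr_family w k S f \<Longrightarrow> S' \<subseteq> S \<Longrightarrow> incr_family w k S' f"
  unfolding incr_family_def by blast

lemma incr_family_empty: "incr_family w k {} f"
  by (simp add: incr_family_def)

lemma incr_family_exchange:
  assumes F: "incr_family w k S f" and p: "p \<in> S" and q: "q \<notin> S" "q < length w"
    and fits: "\<And>a. a \<in> S \<Longrightarrow> a \<noteq> p \<Longrightarrow> f a = f p \<Longrightarrow>
                 (a < q \<longrightarrow> w ! a < w ! q) \<and> (q < a \<longrightarrow> w ! q < w ! a)"
  shows "incr_family w k (insert q (S - {p})) (f(q := f p))"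
  unfolding incr_family_def
proof (intro conjI ballI impI)
  show "insert q (S - {p}) \<subseteq> {..<length w}" using incr_familyD(1)[OF F] q by auto
  show "(f(q := f p)) i < k" if "i \<in> insert q (S - {p})" for i
    using that p q incr_familyD(2)[OF F] by auto
  show "w ! a < w ! b" if "a \<in> insert q (S - {p})" "b \<in> insert q (S - {p})"
    "a < b \<and> (f(q := f p)) a = (f(q := f p)) b" for a b
    using that fits[of a] fits[of b] incr_familyD(3)[OF F, of a b] q(1)
    by (auto split: if_splits)
qed

lemma card_exchange:
  assumes "finite S" "p \<in> S" "q \<notin> S"
  shows "card (insert q (S - {p})) = card S"
  using assms card_gt_0_iff[of S] by (auto simp: card_Diff_singleton)

lemma incr_family_swap_colours_from:
  assumes F: "incr_family w k S f" and c: "c1 < k" "c2 < k"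
    and cross: "\<And>a b. a \<in> S \<Longrightarrow> b \<in> S \<Longrightarrow> a < m \<Longrightarrow> m \<le> b \<Longrightarrow>
                  f a = c1 \<and> f b = c2 \<or> f a = c2 \<and> f b = c1 \<Longrightarrow> w ! a < w ! b"
  shows "incr_family w k S (\<lambda>j. if m \<le> j then transpose c1 c2 (f j) else f j)"
  unfolding incr_family_def
proof (intro conjI ballI impI)
  show "S \<subseteq> {..<length w}" using incr_familyD(1)[OF F] .
  show "(if m \<le> i then transpose c1 c2 (f i) else f i) < k" if "i \<in> S" for i
    using incr_familyD(2)[OF F that] c by (auto simp: transpose_def)
  fix a b assume a: "a \<in> S" and b: "b \<in> S"
    and ab: "a < b \<and> (if m \<le> a then transpose c1 c2 (f a) else f a) =
                     (if m \<le> b then transpose c1 c2 (f b) else f b)"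
  show "w ! a < w ! b"
  proof (cases "a < m \<and> m \<le> b")
    case True
    with ab have "f a = transpose c1 c2 (f b)" by simp
    then have "f a = f b \<or> f a = c1 \<and> f b = c2 \<or> f a = c2 \<and> f b = c1"
      by (auto simp: transpose_def split: if_splits)
    then show ?thesis using incr_familyD(3)[OF F a b] cross[OF a b] True ab by blast
  next
    case False
    with ab have "f a = f b" by (auto simp: transpose_eq_iff split: if_splits)
    then show ?thesis using incr_familyD(3)[OF F a b] ab by blast
  qed
qed

text \<open>In the patterns \<open>x z y\<close> and \<open>y x z\<close> with \<open>x < y < z\<close>, a family can be rearranged so that
  \<open>x\<close> and \<open>z\<close> lie in different subsequences: either the unused \<open>y\<close> replaces one of them, or the
  subsequence through them and the one through \<open>y\<close> exchange their tails.\<close>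

lemma separate_xzy:
  assumes F: "incr_family w k S f" and len: "Suc (Suc i) < length w"
    and xy: "w ! i < w ! Suc (Suc i)" and yz: "w ! Suc (Suc i) < w ! Suc i"
  obtains S' f' where "incr_family w k S' f'" "card S' = card S" "\<not> same_colour S' f' i (Suc i)"
proof (cases "same_colour S f i (Suc i)")
  case False then show ?thesis using F that by blast
next
  case True
  then have xz: "i \<in> S" "Suc i \<in> S" "f i = f (Suc i)" by (auto simp: same_colour_def)
  note Fs = incr_familyD[OF F]
  show ?thesis
  proof (cases "Suc (Suc i) \<in> S")
    case False
    have "incr_family w k (insert (Suc (Suc i)) (S - {Suc i})) (f(Suc (Suc i) := f (Suc i)))"
    proof (rule incr_family_exchange[OF F xz(2) False len])
      fix a assume a: "a \<in> S" "a \<noteq> Suc i" "f a = f (Suc i)"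
      have "w ! a < w ! Suc (Suc i)" if "a < Suc (Suc i)"
      proof (cases "a = i")
        case False
        then have "a < i" using that a(2) by simp
        then show ?thesis using Fs(3)[OF a(1) xz(1)] a(3) xz(3) xy by simp
      qed (use xy in simp)
      moreover have "w ! Suc (Suc i) < w ! a" if "Suc (Suc i) < a"
        using Fs(3)[OF xz(2) a(1)] that a(3) yz by simp
      ultimately show "(a < Suc (Suc i) \<longrightarrow> w ! a < w ! Suc (Suc i)) \<and>
                       (Suc (Suc i) < a \<longrightarrow> w ! Suc (Suc i) < w ! a)" by blast
    qed
    moreover have "card (insert (Suc (Suc i)) (S - {Suc i})) = card S"
      using card_exchange[OF incr_family_finite[OF F] xz(2) False] .
    ultimately show ?thesis using that by (simp add: same_colour_def)
  next
    case y: True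
    have c12: "f i \<noteq> f (Suc (Suc i))"
      using Fs(3)[OF xz(2) y] xz(3) yz by auto
    define f' where "f' j = (if Suc i \<le> j then transpose (f i) (f (Suc (Suc i))) (f j) else f j)"
      for j
    have "incr_family w k S f'"
      unfolding f'_def[abs_def]
    proof (rule incr_family_swap_colours_from[OF F Fs(2)[OF xz(1)] Fs(2)[OF y]])
      fix a b assume a: "a \<in> S" and b: "b \<in> S" and ab: "a < Suc i" "Suc i \<le> b"
        and col: "f a = f i \<and> f b = f (Suc (Suc i)) \<or> f a = f (Suc (Suc i)) \<and> f b = f i"
      have "w ! a \<le> w ! i" if "f a = f i"
        using Fs(3)[OF a xz(1)] that ab by (cases "a = i") auto
      moreover have "w ! Suc (Suc i) \<le> w ! b" if "f b = f (Suc (Suc i))"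
        using Fs(3)[OF y b] that ab xz(3) c12
        by (cases "b = Suc (Suc i)"; cases "b = Suc i") auto
      moreover have "w ! a < w ! Suc (Suc i)" if "f a = f (Suc (Suc i))"
        using Fs(3)[OF a y] that ab by simp
      moreover have "w ! Suc i \<le> w ! b" if "f b = f i"
        using Fs(3)[OF xz(2) b] that ab xz(3) by (cases "b = Suc i") auto
      ultimately show "w ! a < w ! b" using col xy yz by fastforce
    qed
    moreover have "\<not> same_colour S f' i (Suc i)"
      using c12 xz(3) by (simp add: same_colour_def f'_def)
    ultimately show ?thesis using that by blast
  qed
qed

lemma separate_yxz:
  assumes F: "incr_family w k S f" and len: "Suc (Suc i) < length w"
    and xy: "w ! Suc i < w ! i" and yz: "w ! i < w ! Suc (Suc i)"
  obtains S' f' where "incr_family w k S' f'" "card S' = card S"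
    "\<not> same_colour S' f' (Suc i) (Suc (Suc i))"
proof (cases "same_colour S f (Suc i) (Suc (Suc i))")
  case False then show ?thesis using F that by blast
next
  case True
  then have xz: "Suc i \<in> S" "Suc (Suc i) \<in> S" "f (Suc i) = f (Suc (Suc i))"
    by (auto simp: same_colour_def)
  note Fs = incr_familyD[OF F]
  show ?thesis
  proof (cases "i \<in> S")
    case False
    have "incr_family w k (insert i (S - {Suc i})) (f(i := f (Suc i)))"
    proof (rule incr_family_exchange[OF F xz(1) False])
      show "i < length w" using len by simp
      fix a assume a: "a \<in> S" "a \<noteq> Suc i" "f a = f (Suc i)"
      have "w ! a < w ! i" if "a < i"
        using Fs(3)[OF a(1) xz(1)] that a(3) xy by simp
      moreover have "w ! i < w ! a" if "i < a"
      proof (cases "a = Suc (Suc i)")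
        case False
        then have "Suc (Suc i) < a" using that a(2) by simp
        then show ?thesis using Fs(3)[OF xz(2) a(1)] a(3) xz(3) yz by simp
      qed (use yz in simp)
      ultimately show "(a < i \<longrightarrow> w ! a < w ! i) \<and> (i < a \<longrightarrow> w ! i < w ! a)" by blast
    qed
    moreover have "card (insert i (S - {Suc i})) = card S"
      using card_exchange[OF incr_family_finite[OF F] xz(1) False] .
    ultimately show ?thesis using that by (simp add: same_colour_def)
  next
    case y: True
    have c12: "f (Suc i) \<noteq> f i"
      using Fs(3)[OF y xz(1)] xy by auto
    define f' where "f' j = (if Suc (Suc i) \<le> j then transpose (f (Suc i)) (f i) (f j) else f j)"
      for j
    have "incr_family w k S f'"
      unfolding f'_def[abs_def]
    proof (rule incr_family_swap_colours_from[OF F Fs(2)[OF xz(1)] Fs(2)[OF y]])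
      fix a b assume a: "a \<in> S" and b: "b \<in> S" and ab: "a < Suc (Suc i)" "Suc (Suc i) \<le> b"
        and col: "f a = f (Suc i) \<and> f b = f i \<or> f a = f i \<and> f b = f (Suc i)"
      have "w ! a \<le> w ! Suc i" if "f a = f (Suc i)"
        using Fs(3)[OF a xz(1)] that ab by (cases "a = Suc i") auto
      moreover have "w ! i < w ! b" if "f b = f i"
        using Fs(3)[OF y b] that ab by simp
      moreover have "w ! a \<le> w ! i" if "f a = f i"
        using Fs(3)[OF a y] that ab c12 by (cases "a = i") (auto simp: less_Suc_eq)
      moreover have "w ! Suc (Suc i) \<le> w ! b" if "f b = f (Suc i)"
        using Fs(3)[OF xz(2) b] that ab xz(3) by (cases "b = Suc (Suc i)") auto
      ultimately show "w ! a < w ! b" using col xy yz by fastforce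
    qed
    moreover have "\<not> same_colour S f' (Suc i) (Suc (Suc i))"
      using c12 xz(3) by (simp add: same_colour_def f'_def)
    ultimately show ?thesis using that by blast
  qed
qed

section \<open>Knuth equivalence\<close>

lemma nth_swap_adjacent:
  assumes "j < length (u @ p # q # v)"
  shows "(u @ q # p # v) ! j = (u @ p # q # v) ! transpose (length u) (Suc (length u)) j"
proof -
  consider "j < length u" | "j = length u" | "j = Suc (length u)" | "Suc (length u) < j"
    by linarith
  then show ?thesis
  proof cases
    case 4
    then obtain d where "j = Suc (Suc (length u)) + d" using less_iff_Suc_add by auto
    then show ?thesis by (simp add: nth_append)
  qed (simp_all add: nth_append)
qed

lemma nth_append_triple:
  "(u @ a # b # c # v) ! length u = a" "(u @ a # b # c # v) ! Suc (length u) = b"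
  "(u @ a # b # c # v) ! Suc (Suc (length u)) = c"
  by (induction u) auto

lemma has_incr_family_swap:
  assumes F: "incr_family (u @ p # q # v) k S f"
    and sep: "\<not> same_colour S f (length u) (Suc (length u))"
  shows "has_incr_family (u @ q # p # v) k (card S)"
proof -
  let ?t = "transpose (length u) (Suc (length u))"
  note Fs = incr_familyD[OF F]
  have "incr_family (u @ q # p # v) k (?t ` S) (f \<circ> ?t)"
    unfolding incr_family_def
  proof (intro conjI ballI impI)
    show "?t ` S \<subseteq> {..<length (u @ q # p # v)}"
      using Fs(1) by (auto simp: transpose_def)
    show "(f \<circ> ?t) j < k" if "j \<in> ?t ` S" for j
      using Fs(2) that by auto
    fix a b assume a: "a \<in> ?t ` S" and b: "b \<in> ?t ` S" and ab: "a < b \<and> (f \<circ> ?t) a = (f \<circ> ?t) b"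
    have ta: "?t a \<in> S" and tb: "?t b \<in> S" using a b by auto
    have "?t a < ?t b"
    proof (rule ccontr)
      assume "\<not> ?t a < ?t b"
      with ab have "a = length u \<and> b = Suc (length u)"
        by (auto simp: transpose_def split: if_splits)
      with ta tb ab sep show False by (simp add: same_colour_def)
    qed
    then have "(u @ p # q # v) ! ?t a < (u @ p # q # v) ! ?t b"
      using Fs(3)[OF ta tb] ab by simp
    moreover have "a < length (u @ p # q # v)" "b < length (u @ p # q # v)"
      using a b Fs(1) by (auto simp: transpose_def)
    ultimately show "(u @ q # p # v) ! a < (u @ q # p # v) ! b"
      by (simp add: nth_swap_adjacent)
  qed
  moreover have "card (?t ` S) = card S" by (simp add: card_image)
  ultimately show ?thesis unfolding has_incr_family_def by blast
qed

lemma has_incr_family_swap_descent: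
  assumes "q < p" and "has_incr_family (u @ p # q # v) k m"
  shows "has_incr_family (u @ q # p # v) k m"
proof -
  obtain S f where F: "incr_family (u @ p # q # v) k S f" and m: "card S = m"
    using assms(2) unfolding has_incr_family_def by blast
  have "\<not> same_colour S f (length u) (Suc (length u))"
    using incr_familyD(3)[OF F, of "length u" "Suc (length u)"] assms(1)
    by (auto simp: same_colour_def nth_append)
  from has_incr_family_swap[OF F this] show ?thesis using m by simp
qed

inductive knuth_step :: "nat list \<Rightarrow> nat list \<Rightarrow> bool" where
  knuth_xzy: "x < y \<Longrightarrow> y < z \<Longrightarrow> knuth_step (u @ x # z # y # v) (u @ z # x # y # v)"
| knuth_yxz: "x < y \<Longrightarrow> y < z \<Longrightarrow> knuth_step (u @ y # x # z # v) (u @ y # z # x # v)"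

abbreviation knuth_equiv :: "nat list \<Rightarrow> nat list \<Rightarrow> bool" where
  "knuth_equiv \<equiv> equivclp knuth_step"

lemma knuth_step_has_incr_family:
  assumes "knuth_step w w'"
  shows "has_incr_family w k m \<longleftrightarrow> has_incr_family w' k m"
  using assms
proof cases
  case (knuth_xzy x y z u v)
  show ?thesis
  proof
    assume "has_incr_family w k m"
    then obtain S f where F: "incr_family (u @ x # z # y # v) k S f" and m: "card S = m"
      using knuth_xzy unfolding has_incr_family_def by blast
    obtain S' f' where S': "incr_family (u @ x # z # y # v) k S' f'" "card S' = m"
      "\<not> same_colour S' f' (length u) (Suc (length u))"
      using separate_xzy[OF F, of "length u"] knuth_xzy(3,4) nth_append_triple[of u x z y v] m
      by simp blast
    show "has_incr_family w' k m"
      using has_incr_family_swap[OF S'(1,3)] S'(2) knuth_xzy(2) by simp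
  next
    assume "has_incr_family w' k m"
    then show "has_incr_family w k m"
      using has_incr_family_swap_descent[of x z u "y # v"] knuth_xzy by simp
  qed
next
  case (knuth_yxz x y z u v)
  show ?thesis
  proof
    assume "has_incr_family w k m"
    then obtain S f where F: "incr_family (u @ y # x # z # v) k S f" and m: "card S = m"
      using knuth_yxz unfolding has_incr_family_def by blast
    obtain S' f' where S': "incr_family ((u @ [y]) @ x # z # v) k S' f'" "card S' = m"
      "\<not> same_colour S' f' (length (u @ [y])) (Suc (length (u @ [y])))"
      using separate_yxz[OF F, of "length u"] knuth_yxz(3,4) nth_append_triple[of u y x z v] m
      by simp blast
    show "has_incr_family w' k m"
      using has_incr_family_swap[OF S'(1,3)] S'(2) knuth_yxz(2) by simp
  next
    assume "has_incr_family w' k m"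
    then show "has_incr_family w k m"
      using has_incr_family_swap_descent[of x z "u @ [y]" v] knuth_yxz by simp
  qed
qed

lemma knuth_equiv_has_incr_family:
  "knuth_equiv w w' \<Longrightarrow> has_incr_family w k m \<longleftrightarrow> has_incr_family w' k m"
  by (induction rule: equivclp_induct) (auto dest: knuth_step_has_incr_family)

lemma knuth_step_append: "knuth_step w w' \<Longrightarrow> knuth_step (a @ w @ b) (a @ w' @ b)"
proof (induction rule: knuth_step.induct)
  case (knuth_xzy x y z u v)
  then show ?case using knuth_step.knuth_xzy[of x y z "a @ u" "v @ b"] by simp
next
  case (knuth_yxz x y z u v)
  then show ?case using knuth_step.knuth_yxz[of x y z "a @ u" "v @ b"] by simp
qed

lemma knuth_equiv_append: "knuth_equiv w w' \<Longrightarrow> knuth_equiv (a @ w @ b) (a @ w' @ b)"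
  by (induction rule: equivclp_induct) (auto intro: equivclp_into_equivclp knuth_step_append)

lemma knuth_step_set_length: "knuth_step w w' \<Longrightarrow> set w = set w' \<and> length w = length w'"
  by (induction rule: knuth_step.induct) auto

lemma knuth_equiv_set_length: "knuth_equiv w w' \<Longrightarrow> set w = set w' \<and> length w = length w'"
  by (induction rule: equivclp_induct) (auto dest: knuth_step_set_length)

lemma knuth_equiv_insert_into_row:
  assumes "sorted_wrt (<) (p # c)" and "x < p"
  shows "knuth_equiv (u @ p # c @ x # v) (u @ p # x # c @ v)"
  using assms
proof (induction c arbitrary: v rule: rev_induct)
  case Nil
  then show ?case by simp
next
  case (snoc e c)
  obtain pre q where pq: "p # c = pre @ [q]" using rev_exhaust[of "p # c"] by blast
  have q: "q \<in> set (p # c)" unfolding pq by simp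
  then have "x < q" using snoc.prems by auto
  moreover have "q < e"
    using q snoc.prems(1) sorted_wrt_append[of "(<)" "p # c" "[e]"] by auto
  ultimately have "knuth_equiv ((u @ pre) @ q # e # x # v) ((u @ pre) @ q # x # e # v)"
    by (blast intro: knuth_yxz)
  then have "knuth_equiv (u @ p # (c @ [e]) @ x # v) (u @ p # c @ x # e # v)"
    using pq by (metis append.assoc append_Cons append_Nil)
  also have "knuth_equiv \<dots> (u @ p # x # c @ e # v)"
    using snoc by (simp add: sorted_wrt_append)
  finally show ?case by simp
qed

lemma knuth_equiv_move_bumped:
  assumes "sorted_wrt (<) a" and "\<forall>e\<in>set a. e < y" and "y < b"
  shows "knuth_equiv (u @ a @ b # y # v) (u @ b # a @ y # v)"
  using assms
proof (induction a arbitrary: y v rule: rev_induct)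
  case Nil
  then show ?case by simp
next
  case (snoc e a)
  have "knuth_step ((u @ a) @ e # b # y # v) ((u @ a) @ b # e # y # v)"
    using snoc.prems by (intro knuth_xzy) auto
  then have "knuth_equiv (u @ (a @ [e]) @ b # y # v) (u @ a @ b # e # y # v)" by auto
  also have "knuth_equiv \<dots> (u @ b # a @ e # y # v)"
    using snoc by (simp add: sorted_wrt_append)
  finally show ?case by simp
qed

lemma knuth_equiv_row_bump:
  assumes "sorted_wrt (<) (a @ b # c)" and "\<forall>e\<in>set a. e < x" and "x < b"
  shows "knuth_equiv (a @ b # c @ [x]) (b # a @ x # c)"
proof -
  have "knuth_equiv (a @ b # c @ [x]) (a @ b # x # c)"
    using knuth_equiv_insert_into_row[of b c x a "[]"] assms by (simp add: sorted_wrt_append)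
  also have "knuth_equiv \<dots> (b # a @ x # c)"
    using knuth_equiv_move_bumped[of a x b "[]" c] assms by (simp add: sorted_wrt_append)
  finally show ?thesis .
qed

section \<open>Row insertion and tableaux\<close>

lemma row_ins_Cons_cases:
  obtains "\<forall>e\<in>set r. e < x" and "row_ins x (r # rs) = (r @ [x]) # rs"
  | a b c where "r = a @ b # c" "\<forall>e\<in>set a. e < x" "\<not> b < x"
    "row_ins x (r # rs) = (a @ x # c) # row_ins b rs"
proof (cases "dropWhile (\<lambda>y. y < x) r")
  case Nil
  then have "takeWhile (\<lambda>y. y < x) r = r"
    using takeWhile_dropWhile_id[of "\<lambda>y. y < x" r] by simp
  then have "\<forall>e\<in>set r. e < x" by (metis set_takeWhileD)
  with Nil show ?thesis using that(1) by (simp add: Let_def)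
next
  case (Cons b c)
  have "r = takeWhile (\<lambda>y. y < x) r @ b # c" "\<not> b < x"
    using Cons unfolding dropWhile_eq_Cons_conv by blast+
  moreover have "\<forall>e\<in>set (takeWhile (\<lambda>y. y < x) r). e < x"
    by (blast dest: set_takeWhileD)
  moreover have "row_ins x (r # rs) = (takeWhile (\<lambda>y. y < x) r @ x # c) # row_ins b rs"
    using Cons by (simp add: Let_def)
  ultimately show ?thesis using that(2) by blast
qed

declare row_ins.simps(2) [simp del]

definition reading_word :: "nat list list \<Rightarrow> nat list" where
  "reading_word T = concat (rev T)"

lemma reading_word_simps [simp]:
  "reading_word [] = []" "reading_word (r # rs) = reading_word rs @ r"
  by (simp_all add: reading_word_def)

lemma rsk_P_snoc: "rsk_P (w @ [x]) = row_ins x (rsk_P w)"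
  by (simp add: rsk_P_def)

definition column_strict :: "nat list \<Rightarrow> nat list \<Rightarrow> bool" where
  "column_strict r s \<longleftrightarrow> length s \<le> length r \<and> (\<forall>c<length s. r ! c < s ! c)"

fun tableau :: "nat list list \<Rightarrow> bool" where
  "tableau [] \<longleftrightarrow> True"
| "tableau (r # rs) \<longleftrightarrow> sorted_wrt (<) r \<and> tableau rs \<and> (rs \<noteq> [] \<longrightarrow> column_strict r (hd rs))"

lemma tableau_rows_sorted: "tableau T \<Longrightarrow> r \<in> set T \<Longrightarrow> sorted_wrt (<) r"
  by (induction T) auto

lemma tableau_column:
  assumes "tableau T" "j < j'" "j' < length T" "c < length (T ! j')"
  shows "c < length (T ! j) \<and> T ! j ! c < T ! j' ! c"
  using assms
proof (induction T arbitrary: j j')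
  case (Cons r rs)
  then obtain i' where j': "j' = Suc i'" by (cases j') auto
  have top: "c < length r \<and> r ! c < rs ! 0 ! c" if "c < length (rs ! 0)"
    using Cons.prems(1,3) that j' by (auto simp: column_strict_def hd_conv_nth)
  show ?case
  proof (cases j)
    case 0
    show ?thesis
    proof (cases i')
      case (Suc i)
      then show ?thesis using Cons 0 j' top by (fastforce dest: Cons.IH[of 0 i'])
    qed (use Cons 0 j' top in simp)
  next
    case (Suc i)
    then show ?thesis using Cons j' by simp
  qed
qed simp

lemma column_strict_bump:
  assumes sorted: "sorted_wrt (<) (a @ b # c)" and cs: "column_strict (a @ b # c) (a' @ s)"
    and ax: "\<forall>e\<in>set a. e < x" and xb: "x < b" and a'b: "\<forall>e\<in>set a'. e < b"
  shows "column_strict (a @ x # c) (a' @ b # drop 1 s)"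
proof -
  let ?r = "a @ b # c" and ?s = "a' @ s"
  have below: "?r ! i < ?s ! i" if "i < length ?s" for i
    using cs that by (simp add: column_strict_def)
  have "length a' \<le> length a"
  proof (rule ccontr)
    assume "\<not> length a' \<le> length a"
    then have "?r ! length a < a' ! length a"
      using below[of "length a"] by (simp add: nth_append)
    moreover have "a' ! length a \<in> set a'" using \<open>\<not> length a' \<le> length a\<close> by simp
    ultimately show False using a'b by (fastforce simp: nth_append)
  qed
  have new_le: "(a @ x # c) ! i \<le> ?r ! i" for i
    using xb by (cases "i = length a") (auto simp: nth_append)
  show ?thesis
    unfolding column_strict_def
  proof (intro conjI allI impI)
    show "length (a' @ b # drop 1 s) \<le> length (a @ x # c)"
      using cs \<open>length a' \<le> length a\<close> by (cases s) (auto simp: column_strict_def)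
    fix i assume i: "i < length (a' @ b # drop 1 s)"
    show "(a @ x # c) ! i < (a' @ b # drop 1 s) ! i"
    proof (cases "i = length a'")
      case True
      have "a ! length a' < b" if "length a' < length a"
        using ax xb nth_mem[OF that] by fastforce
      then show ?thesis
        using True xb \<open>length a' \<le> length a\<close>
        by (cases "length a' = length a") (auto simp: nth_append)
    next
      case False
      then have "(a' @ b # drop 1 s) ! i = ?s ! i" and "i < length ?s"
        using i by (cases s; auto simp: nth_append nth_Cons')+
      then show ?thesis using new_le[of i] below[of i] by simp
    qed
  qed
qed

lemma head_row_ins_bump:
  assumes "\<forall>e\<in>set a. e < x" "x < b" "sorted_wrt (<) (a @ b # c)" "tableau rs"
    "rs \<noteq> [] \<longrightarrow> column_strict (a @ b # c) (hd rs)" "b \<notin> set (concat rs)"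
  shows "column_strict (a @ x # c) (hd (row_ins b rs))"
proof (cases rs)
  case Nil
  then show ?thesis
    using column_strict_bump[of a b c "[]" "[]" x] assms by (simp add: column_strict_def)
next
  case (Cons s ss)
  show ?thesis
  proof (cases rule: row_ins_Cons_cases[of s b ss])
    case 1
    then show ?thesis
      using column_strict_bump[of a b c s "[]" x] assms Cons by simp
  next
    case (2 a' b' c')
    then show ?thesis
      using column_strict_bump[of a b c a' "b' # c'" x] assms Cons by simp
  qed
qed

lemma tableau_row_ins:
  assumes "tableau T" and "distinct (x # reading_word T)"
  shows "tableau (row_ins x T)"
  using assms
proof (induction T arbitrary: x)
  case (Cons r rs)
  show ?case
  proof (cases rule: row_ins_Cons_cases[of r x rs])
    case 1
    then show ?thesis
      using Cons.prems by (auto simp: sorted_wrt_append column_strict_def nth_append)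
  next
    case (2 a b c)
    have xb: "x < b" using 2 Cons.prems(2) by auto
    have "tableau (row_ins b rs)"
      using Cons.IH[of b] Cons.prems 2 by auto
    moreover have "sorted_wrt (<) (a @ x # c)"
      using Cons.prems(1) 2 xb by (auto simp: sorted_wrt_append)
    moreover have "column_strict (a @ x # c) (hd (row_ins b rs))"
      using head_row_ins_bump[of a x b c rs] Cons.prems 2 xb by (auto simp: reading_word_def)
    moreover have "row_ins b rs \<noteq> []" by (cases rs) (auto simp: row_ins.simps Let_def)
    ultimately show ?thesis using 2 by simp
  qed
qed simp

lemma knuth_equiv_row_ins:
  assumes "tableau T" and "distinct (x # reading_word T)"
  shows "knuth_equiv (reading_word T @ [x]) (reading_word (row_ins x T))"
  using assms
proof (induction T arbitrary: x)
  case (Cons r rs)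
  show ?case
  proof (cases rule: row_ins_Cons_cases[of r x rs])
    case 1
    then show ?thesis by simp
  next
    case (2 a b c)
    have xb: "x < b" using 2 Cons.prems(2) by auto
    have "reading_word (r # rs) @ [x] = reading_word rs @ (a @ b # c @ [x]) @ []"
      using 2 by simp
    also have "knuth_equiv \<dots> (reading_word rs @ (b # a @ x # c) @ [])"
      using knuth_equiv_row_bump[of a b c x] Cons.prems(1) 2 xb
      by (intro knuth_equiv_append) simp
    also have "\<dots> = [] @ (reading_word rs @ [b]) @ (a @ x # c)" by simp
    also have "knuth_equiv \<dots> ([] @ reading_word (row_ins b rs) @ (a @ x # c))"
      using Cons.IH[of b] Cons.prems 2 by (intro knuth_equiv_append) auto
    also have "\<dots> = reading_word (row_ins x (r # rs))" using 2 by simp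
    finally show ?thesis .
  qed
qed simp

lemma knuth_equiv_distinct: "knuth_equiv w w' \<Longrightarrow> distinct w \<Longrightarrow> distinct w'"
  by (metis card_distinct distinct_card knuth_equiv_set_length)

lemma rsk_P_tableau_knuth_equiv:
  assumes "distinct w"
  shows "tableau (rsk_P w) \<and> knuth_equiv w (reading_word (rsk_P w))"
  using assms
proof (induction w rule: rev_induct)
  case Nil
  then show ?case by (simp add: rsk_P_def)
next
  case (snoc x w)
  then have IH: "tableau (rsk_P w)" "knuth_equiv w (reading_word (rsk_P w))" by simp_all
  have "distinct (x # reading_word (rsk_P w))"
    using snoc.prems knuth_equiv_distinct[OF IH(2)] knuth_equiv_set_length[OF IH(2)] by auto
  moreover have "knuth_equiv (w @ [x]) (reading_word (rsk_P w) @ [x])"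
    using knuth_equiv_append[OF IH(2), of "[]" "[x]"] by simp
  ultimately show ?case
    using IH tableau_row_ins[OF IH(1)] knuth_equiv_row_ins[OF IH(1)] equivclp_trans
    unfolding rsk_P_snoc by metis
qed

section \<open>Greene's theorem\<close>

definition row_length :: "nat list list \<Rightarrow> nat \<Rightarrow> nat" where
  "row_length T j = (if j < length T then length (T ! j) else 0)"

lemma row_length_Cons:
  "row_length (r # rs) 0 = length r" "row_length (r # rs) (Suc j) = row_length rs j"
  by (simp_all add: row_length_def)

lemma incr_family_append_sorted:
  assumes F: "incr_family w k S f" and r: "sorted_wrt (<) r"
  shows "incr_family (w @ r) (Suc k) (S \<union> {length w..<length w + length r})
           (\<lambda>i. if i < length w then f i else k)"
  unfolding incr_family_def
proof (intro conjI ballI impI)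
  note Fs = incr_familyD[OF F]
  show "S \<union> {length w..<length w + length r} \<subseteq> {..<length (w @ r)}" using Fs(1) by auto
  show "(if i < length w then f i else k) < Suc k"
    if "i \<in> S \<union> {length w..<length w + length r}" for i
    using Fs(2)[of i] that by fastforce
  fix a b assume a: "a \<in> S \<union> {length w..<length w + length r}"
    and b: "b \<in> S \<union> {length w..<length w + length r}"
    and ab: "a < b \<and> (if a < length w then f a else k) = (if b < length w then f b else k)"
  consider "b < length w" | "a < length w" "\<not> b < length w" | "\<not> a < length w"
    using ab by linarith
  then show "(w @ r) ! a < (w @ r) ! b"
  proof cases
    case 1
    then show ?thesis using Fs(1,3) a b ab by (auto simp: nth_append)
  next
    case 2
    then show ?thesis using Fs(1,2) a ab by (auto simp: nth_append)
  next
    case 3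
    then have "length w \<le> a" "a < b" "b < length w + length r" using a b ab Fs(1) by auto
    then show ?thesis using sorted_wrt_nth_less[OF r, of "a - length w" "b - length w"]
      by (simp add: nth_append)
  qed
qed

lemma has_incr_family_reading_word:
  assumes "\<forall>r\<in>set T. sorted_wrt (<) r"
  shows "has_incr_family (reading_word T) k (\<Sum>j<k. row_length T j)"
  using assms
proof (induction T arbitrary: k)
  case Nil
  then show ?case
    using incr_family_empty unfolding has_incr_family_def row_length_def by fastforce
next
  case (Cons r rs)
  show ?case
  proof (cases k)
    case 0
    then show ?thesis using incr_family_empty unfolding has_incr_family_def by fastforce
  next
    case (Suc k')
    obtain S f where F: "incr_family (reading_word rs) k' S f"
      and S: "card S = (\<Sum>j<k'. row_length rs j)"
      using Cons unfolding has_incr_family_def by fastforce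
    let ?S = "S \<union> {length (reading_word rs)..<length (reading_word rs) + length r}"
    have "S \<inter> {length (reading_word rs)..<length (reading_word rs) + length r} = {}"
      using incr_familyD(1)[OF F] by auto
    then have "card ?S = length r + (\<Sum>j<k'. row_length rs j)"
      using incr_family_finite[OF F] S by (simp add: card_Un_disjoint)
    also have "\<dots> = (\<Sum>j<k. row_length (r # rs) j)"
      unfolding Suc sum.lessThan_Suc_shift by (simp add: row_length_Cons)
    finally show ?thesis
      using incr_family_append_sorted[OF F, of r] Cons.prems Suc
      unfolding has_incr_family_def by auto
  qed
qed

definition cells :: "nat list list \<Rightarrow> (nat \<times> nat) set" where
  "cells T = {(j, c). j < length T \<and> c < length (T ! j)}"

definition cell_pos :: "nat list list \<Rightarrow> nat \<times> nat \<Rightarrow> nat" where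
  "cell_pos T = (\<lambda>(j, c). length (reading_word (drop (Suc j) T)) + c)"

lemma reading_word_drop:
  "j < length T \<Longrightarrow> reading_word (drop j T) = reading_word (drop (Suc j) T) @ T ! j"
  by (simp add: Cons_nth_drop_Suc[symmetric])

lemma length_reading_word_drop_mono:
  "i \<le> j \<Longrightarrow> length (reading_word (drop j T)) \<le> length (reading_word (drop i T))"
proof (induction j)
  case (Suc j)
  then show ?case
    by (cases "j < length T") (auto simp: reading_word_drop le_Suc_eq)
qed simp

lemma reading_word_append: "reading_word (xs @ ys) = reading_word ys @ reading_word xs"
  by (simp add: reading_word_def)

lemma reading_word_cell_pos:
  assumes "(j, c) \<in> cells T"
  shows "reading_word T ! cell_pos T (j, c) = T ! j ! c"
proof -
  have j: "j < length T" and c: "c < length (T ! j)" using assms by (auto simp: cells_def)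
  have "reading_word T = reading_word (take j T @ T ! j # drop (Suc j) T)"
    using id_take_nth_drop[OF j] by (rule arg_cong)
  also have "\<dots> = reading_word (drop (Suc j) T) @ T ! j @ reading_word (take j T)"
    by (simp add: reading_word_append)
  finally show ?thesis using c by (simp add: cell_pos_def nth_append)
qed

lemma cell_pos_less_length_drop:
  "(j, c) \<in> cells T \<Longrightarrow> cell_pos T (j, c) < length (reading_word (drop j T))"
  by (simp add: cells_def cell_pos_def reading_word_drop)

lemma cell_pos_less:
  assumes "j < j'" and "(j', c') \<in> cells T"
  shows "cell_pos T (j', c') < cell_pos T (j, c)"
proof -
  have "cell_pos T (j', c') < length (reading_word (drop j' T))"
    using cell_pos_less_length_drop[OF assms(2)] .
  also have "\<dots> \<le> length (reading_word (drop (Suc j) T))"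
    using assms(1) by (intro length_reading_word_drop_mono) simp
  finally show ?thesis by (simp add: cell_pos_def)
qed

lemma cells_Sigma: "cells T = Sigma {..<length T} (\<lambda>j. {..<length (T ! j)})"
  by (auto simp: cells_def)

lemma card_cells: "card (cells T) = length (reading_word T)"
proof -
  have "card (cells T) = (\<Sum>j<length T. length (T ! j))" by (simp add: cells_Sigma)
  also have "\<dots> = sum_list (map length T)" by (simp add: sum_list_sum_nth atLeast0LessThan)
  also have "\<dots> = length (reading_word T)"
    by (simp add: reading_word_def length_concat rev_map[symmetric] sum_list_rev)
  finally show ?thesis .
qed

lemma bij_betw_cell_pos: "bij_betw (cell_pos T) (cells T) {..<length (reading_word T)}"
proof -
  have inj: "inj_on (cell_pos T) (cells T)"
  proof (rule inj_onI)
    fix x y assume x: "x \<in> cells T" and y: "y \<in> cells T" and eq: "cell_pos T x = cell_pos T y"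
    obtain j c j' c' where xy: "x = (j, c)" "y = (j', c')" by fastforce
    have "j = j'"
      using cell_pos_less[where j=j and j'=j' and c'=c' and c=c and T=T]
        cell_pos_less[where j=j' and j'=j and c'=c and c=c' and T=T] x y eq xy
      by (metis less_irrefl linorder_neqE_nat)
    then show "x = y" using eq xy by (simp add: cell_pos_def)
  qed
  moreover have sub: "cell_pos T ` cells T \<subseteq> {..<length (reading_word T)}"
  proof
    fix p assume "p \<in> cell_pos T ` cells T"
    then obtain j c where jc: "(j, c) \<in> cells T" and p: "p = cell_pos T (j, c)" by auto
    have "p < length (reading_word (drop j T))" using cell_pos_less_length_drop[OF jc] p by simp
    also have "\<dots> \<le> length (reading_word (drop 0 T))" by (rule length_reading_word_drop_mono) simp
    finally show "p \<in> {..<length (reading_word T)}" by simp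
  qed
  moreover have "cell_pos T ` cells T = {..<length (reading_word T)}"
    using sub by (intro card_seteq) (simp_all add: card_image[OF inj] card_cells)
  ultimately show ?thesis unfolding bij_betw_def by blast
qed

lemma card_eq_sum_column_slices:
  fixes X :: "('a \<times> 'b) set"
  assumes "finite X" and "finite C" and "snd ` X \<subseteq> C"
  shows "card X = (\<Sum>c\<in>C. card {j. (j, c) \<in> X})"
proof -
  have slices: "finite {j. (j, c) \<in> X}" for c
    using finite_imageI[OF assms(1), of fst] by (rule finite_subset[rotated]) force
  have "X = (\<lambda>(c, j). (j, c)) ` Sigma C (\<lambda>c. {j. (j, c) \<in> X})"
    using assms(3) by force
  moreover have "inj_on (\<lambda>(c, j). (j, c)) (Sigma C (\<lambda>c. {j. (j, c) \<in> X}))"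
    by (auto simp: inj_on_def)
  ultimately have "card X = card (Sigma C (\<lambda>c. {j. (j, c) \<in> X}))" by (metis card_image)
  also have "\<dots> = (\<Sum>c\<in>C. card {j. (j, c) \<in> X})" using assms(2) slices by simp
  finally show ?thesis .
qed

lemma card_le_by_column_slices:
  fixes A B :: "('a \<times> 'b) set"
  assumes "finite A" and "finite B" and "\<And>c. card {j. (j, c) \<in> A} \<le> card {j. (j, c) \<in> B}"
  shows "card A \<le> card B"
proof -
  let ?C = "snd ` (A \<union> B)"
  have "card A = (\<Sum>c\<in>?C. card {j. (j, c) \<in> A})"
    using assms(1,2) by (intro card_eq_sum_column_slices) auto
  also have "\<dots> \<le> (\<Sum>c\<in>?C. card {j. (j, c) \<in> B})" by (intro sum_mono assms(3))
  also have "\<dots> = card B"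
    using assms(1,2) by (intro card_eq_sum_column_slices[symmetric]) auto
  finally show ?thesis .
qed

text \<open>Read bottom row first, every column of a tableau decreases, so an increasing subsequence
  meets it at most once.\<close>

lemma incr_family_column_card_le:
  assumes T: "tableau T" and F: "incr_family (reading_word T) k S f"
  shows "card {j. (j, c) \<in> cells T \<and> cell_pos T (j, c) \<in> S} \<le> card {j. (j, c) \<in> cells T \<and> j < k}"
proof -
  let ?A = "{j. (j, c) \<in> cells T \<and> cell_pos T (j, c) \<in> S}" and ?D = "{j. (j, c) \<in> cells T}"
  have fin: "finite ?D" by (rule finite_subset[of _ "{..<length T}"]) (auto simp: cells_def)
  have down: "j \<in> ?D" if "j' \<in> ?D" "j < j'" for j j'
    using that tableau_column[OF T, of j j' c] by (auto simp: cells_def)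
  show ?thesis
  proof (cases "?D \<subseteq> {..<k}")
    case True
    then have "{j. (j, c) \<in> cells T \<and> j < k} = ?D" by auto
    then show ?thesis using fin by (auto intro: card_mono)
  next
    case False
    then obtain j0 where "j0 \<in> ?D" "\<not> j0 < k" by blast
    then have "{j. (j, c) \<in> cells T \<and> j < k} = {..<k}" using down by fastforce
    moreover have "inj_on (\<lambda>j. f (cell_pos T (j, c))) ?A"
    proof (rule linorder_inj_onI')
      fix i j assume i: "i \<in> ?A" and j: "j \<in> ?A" and ij: "i < j"
      have "T ! i ! c < T ! j ! c"
        using tableau_column[OF T ij] j by (auto simp: cells_def)
      moreover have "cell_pos T (j, c) < cell_pos T (i, c)" using cell_pos_less[OF ij] j by simp
      ultimately show "f (cell_pos T (i, c)) \<noteq> f (cell_pos T (j, c))"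
        using incr_familyD(3)[OF F] i j reading_word_cell_pos by fastforce
    qed
    moreover have "(\<lambda>j. f (cell_pos T (j, c))) ` ?A \<subseteq> {..<k}" using incr_familyD(2)[OF F] by auto
    ultimately show ?thesis
      using card_inj_on_le[of "\<lambda>j. f (cell_pos T (j, c))" ?A "{..<k}"] by simp
  qed
qed

lemma card_incr_family_reading_word_le:
  assumes T: "tableau T" and F: "incr_family (reading_word T) k S f"
  shows "card S \<le> (\<Sum>j<k. row_length T j)"
proof -
  let ?A = "{x \<in> cells T. cell_pos T x \<in> S}" and ?B = "{(j, c) \<in> cells T. j < k}"
  have fin_cells: "finite (cells T)" by (simp add: cells_Sigma)
  have "card S = card ?A"
  proof -
    have "S \<subseteq> cell_pos T ` cells T"
      using incr_familyD(1)[OF F] bij_betw_cell_pos[of T] by (simp add: bij_betw_def)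
    then have "cell_pos T ` ?A = S" by auto
    moreover have "inj_on (cell_pos T) ?A"
      using bij_betw_cell_pos[of T] by (auto simp: bij_betw_def intro: inj_on_subset)
    ultimately show ?thesis using card_image by fastforce
  qed
  also have "\<dots> \<le> card ?B"
  proof (rule card_le_by_column_slices)
    show "finite ?A" "finite ?B" using fin_cells by (auto intro: finite_subset[rotated])
  qed (use incr_family_column_card_le[OF T F] in auto)
  also have "?B = Sigma {..<min k (length T)} (\<lambda>j. {..<length (T ! j)})"
    by (auto simp: cells_Sigma)
  also have "card \<dots> = (\<Sum>j<min k (length T). row_length T j)"
    by (simp add: row_length_def)
  also have "\<dots> = (\<Sum>j<k. row_length T j)"
    by (rule sum.mono_neutral_left) (auto simp: row_length_def)
  finally show ?thesis .
qed

lemma rsk_shape_eq_row_length: "rsk_shape w = row_length (rsk_P w)"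
  by (simp add: fun_eq_iff rsk_shape_def row_length_def Let_def)

theorem greene_has_incr_family:
  assumes "distinct w"
  shows "has_incr_family w k (\<Sum>j<k. rsk_shape w j)"
proof -
  have P: "tableau (rsk_P w)" "knuth_equiv w (reading_word (rsk_P w))"
    using rsk_P_tableau_knuth_equiv[OF assms] by simp_all
  have "has_incr_family (reading_word (rsk_P w)) k (\<Sum>j<k. row_length (rsk_P w) j)"
    using P(1) tableau_rows_sorted by (blast intro: has_incr_family_reading_word)
  then show ?thesis
    using knuth_equiv_has_incr_family[OF P(2)] by (simp add: rsk_shape_eq_row_length)
qed

theorem greene_card_incr_family_le:
  assumes "distinct w" and "incr_family w k S f"
  shows "card S \<le> (\<Sum>j<k. rsk_shape w j)"
proof -
  have P: "tableau (rsk_P w)" "knuth_equiv w (reading_word (rsk_P w))"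
    using rsk_P_tableau_knuth_equiv[OF assms(1)] by simp_all
  have "has_incr_family (reading_word (rsk_P w)) k (card S)"
    using assms(2) knuth_equiv_has_incr_family[OF P(2)] unfolding has_incr_family_def by blast
  then obtain S' f' where "incr_family (reading_word (rsk_P w)) k S' f'" "card S' = card S"
    unfolding has_incr_family_def by blast
  then show ?thesis
    using card_incr_family_reading_word_le[OF P(1)] by (metis rsk_shape_eq_row_length)
qed

section \<open>Adjacent transpositions\<close>

lemma length_left_adj [simp]: "length (left_adj v w) = length w"
  by (simp add: left_adj_def)

lemma nth_left_adj:
  "i < length w \<Longrightarrow>
    left_adj v w ! i = (if w ! i = v then Suc v else if w ! i = Suc v then v else w ! i)"
  by (simp add: left_adj_def)

lemma left_adj_left_adj [simp]: "left_adj v (left_adj v w) = w"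
  by (induction w) (auto simp: left_adj_def)

lemma distinct_left_adj: "distinct w \<Longrightarrow> distinct (left_adj v w)"
  unfolding left_adj_def distinct_map by (auto simp: inj_on_def)

definition precedes :: "nat list \<Rightarrow> nat \<Rightarrow> nat \<Rightarrow> bool" where
  "precedes w a b \<longleftrightarrow> (\<exists>i j. i < j \<and> j < length w \<and> w ! i = a \<and> w ! j = b)"

lemma not_precedes_left_adj:
  assumes "distinct w" and "precedes w v (Suc v)"
  shows "\<not> precedes (left_adj v w) v (Suc v)"
proof
  obtain i j where ij: "i < j" "j < length w" "w ! i = v" "w ! j = Suc v"
    using assms(2) unfolding precedes_def by blast
  assume "precedes (left_adj v w) v (Suc v)"
  then obtain i' j' where ij': "i' < j'" "j' < length w" "left_adj v w ! i' = v"
    "left_adj v w ! j' = Suc v"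
    unfolding precedes_def by auto
  have "w ! i' = Suc v" "w ! j' = v"
    using ij' by (auto simp: nth_left_adj split: if_splits)
  then have "i' = j" "j' = i"
    using ij ij' assms(1) nth_eq_iff_index_eq by (metis less_trans)+
  then show False using ij(1) ij'(1) by simp
qed

lemma incr_family_left_adj:
  assumes F: "incr_family w k S f"
    and no_pair: "\<And>i j. i \<in> S \<Longrightarrow> j \<in> S \<Longrightarrow> i < j \<Longrightarrow> f i = f j \<Longrightarrow> \<not> (w ! i = v \<and> w ! j = Suc v)"
  shows "incr_family (left_adj v w) k S f"
  unfolding incr_family_def
proof (intro conjI ballI impI)
  note Fs = incr_familyD[OF F]
  show "S \<subseteq> {..<length (left_adj v w)}" using Fs(1) by simp
  show "f i < k" if "i \<in> S" for i using Fs(2) that .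
  fix i j assume i: "i \<in> S" and j: "j \<in> S" and ij: "i < j \<and> f i = f j"
  then show "left_adj v w ! i < left_adj v w ! j"
    using Fs(1) Fs(3)[OF i j] no_pair[OF i j] i j by (auto simp: nth_left_adj)
qed

lemma shape_sum_le_left_adj:
  assumes "distinct w" and "\<not> precedes w v (Suc v)"
  shows "(\<Sum>j<k. rsk_shape w j) \<le> (\<Sum>j<k. rsk_shape (left_adj v w) j)"
proof -
  obtain S f where F: "incr_family w k S f" and S: "card S = (\<Sum>j<k. rsk_shape w j)"
    using greene_has_incr_family[OF assms(1)] unfolding has_incr_family_def by blast
  have "incr_family (left_adj v w) k S f"
    using incr_family_left_adj[OF F] incr_familyD(1)[OF F] assms(2)
    unfolding precedes_def by blast
  then show ?thesis
    using greene_card_incr_family_le[OF distinct_left_adj[OF assms(1)]] S by metis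
qed

text \<open>Only a subsequence passing from \<open>v\<close> to \<open>v + 1\<close> is broken by the exchange, and removing the
  single position of \<open>v + 1\<close> repairs all of them.\<close>

lemma shape_sum_le_left_adj_Suc:
  assumes "distinct w"
  shows "(\<Sum>j<k. rsk_shape w j) \<le> (\<Sum>j<k. rsk_shape (left_adj v w) j) + 1"
proof -
  obtain S f where F: "incr_family w k S f" and S: "card S = (\<Sum>j<k. rsk_shape w j)"
    using greene_has_incr_family[OF assms(1)] unfolding has_incr_family_def by blast
  define S' where "S' = {i \<in> S. w ! i \<noteq> Suc v}"
  have "card {i \<in> S. w ! i = Suc v} \<le> Suc 0"
  proof (subst card_le_Suc0_iff_eq)
    show "finite {i \<in> S. w ! i = Suc v}" using incr_family_finite[OF F] by simp
    show "\<forall>i\<in>{i \<in> S. w ! i = Suc v}. \<forall>j\<in>{i \<in> S. w ! i = Suc v}. i = j"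
      using incr_familyD(1)[OF F] assms(1)
      by (metis (mono_tags, lifting) lessThan_iff mem_Collect_eq nth_eq_iff_index_eq subsetD)
  qed
  moreover have "S = S' \<union> {i \<in> S. w ! i = Suc v}" by (auto simp: S'_def)
  then have "card S \<le> card S' + card {i \<in> S. w ! i = Suc v}" by (metis card_Un_le)
  moreover have "incr_family (left_adj v w) k S' f"
  proof (rule incr_family_left_adj)
    show "incr_family w k S' f" using F by (rule incr_family_subset) (auto simp: S'_def)
  qed (simp add: S'_def)
  then have "card S' \<le> (\<Sum>j<k. rsk_shape (left_adj v w) j)"
    using greene_card_incr_family_le[OF distinct_left_adj[OF assms(1)]] by blast
  ultimately show ?thesis using S by linarith
qed

text \<open>The partial sums at \<open>a\<close> and at \<open>b\<close> move in the same direction, each by at most one.\<close>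

lemma shape_window_le_left_adj:
  assumes "distinct w"
  shows "(\<Sum>j\<in>{a..<b}. rsk_shape w j) \<le> (\<Sum>j\<in>{a..<b}. rsk_shape (left_adj v w) j) + 1"
proof (cases "a \<le> b")
  case True
  let ?w' = "left_adj v w"
  have split: "(\<Sum>j<b. rsk_shape u j) = (\<Sum>j<a. rsk_shape u j) + (\<Sum>j\<in>{a..<b}. rsk_shape u j)"
    for u using True by (metis atLeast0LessThan le0 sum.atLeastLessThan_concat)
  have d': "distinct ?w'" using distinct_left_adj[OF assms] .
  have "(\<Sum>j<a. rsk_shape ?w' j) \<le> (\<Sum>j<a. rsk_shape w j) \<and>
          (\<Sum>j<b. rsk_shape w j) \<le> (\<Sum>j<b. rsk_shape ?w' j) + 1 \<or>
        (\<Sum>j<b. rsk_shape w j) \<le> (\<Sum>j<b. rsk_shape ?w' j) \<and>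
          (\<Sum>j<a. rsk_shape ?w' j) \<le> (\<Sum>j<a. rsk_shape w j) + 1"
  proof (cases "precedes w v (Suc v)")
    case True
    then show ?thesis
      using shape_sum_le_left_adj[OF d' not_precedes_left_adj[OF assms True], of a]
        shape_sum_le_left_adj_Suc[OF assms, of b v] by simp
  next
    case False
    then show ?thesis
      using shape_sum_le_left_adj[OF assms False, of b]
        shape_sum_le_left_adj_Suc[OF d', of a v] by simp
  qed
  then show ?thesis using split[of w] split[of ?w'] by linarith
qed simp

lemma shape_window_adj_step_path:
  assumes "(adj_step n ^^ m) p q" and "distinct p"
  shows "(\<Sum>j\<in>{a..<b}. rsk_shape p j) \<le> (\<Sum>j\<in>{a..<b}. rsk_shape q j) + m \<and>
         (\<Sum>j\<in>{a..<b}. rsk_shape q j) \<le> (\<Sum>j\<in>{a..<b}. rsk_shape p j) + m"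
  using assms
proof (induction m arbitrary: p)
  case 0
  then show ?case by simp
next
  case (Suc m)
  obtain r where "adj_step n p r" and path: "(adj_step n ^^ m) r q"
    using Suc.prems(1) by (rule relpowp_Suc_E2)
  then obtain k where "r = left_adj k p" unfolding adj_step_def by blast
  note r = this path
  have "distinct r" using distinct_left_adj[OF Suc.prems(2)] r(1) by simp
  then have "(\<Sum>j\<in>{a..<b}. rsk_shape r j) \<le> (\<Sum>j\<in>{a..<b}. rsk_shape q j) + m \<and>
             (\<Sum>j\<in>{a..<b}. rsk_shape q j) \<le> (\<Sum>j\<in>{a..<b}. rsk_shape r j) + m"
    using Suc.IH r(2) by blast
  moreover have "(\<Sum>j\<in>{a..<b}. rsk_shape p j) \<le> (\<Sum>j\<in>{a..<b}. rsk_shape r j) + 1"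
    using shape_window_le_left_adj[OF Suc.prems(2)] r(1) by simp
  moreover have "(\<Sum>j\<in>{a..<b}. rsk_shape r j) \<le> (\<Sum>j\<in>{a..<b}. rsk_shape p j) + 1"
    using shape_window_le_left_adj[OF \<open>distinct r\<close>, of a b k] r(1) by simp
  ultimately show ?case by linarith
qed

section \<open>Connectedness under adjacent transpositions\<close>

lemma adj_step_sym: "adj_step n p q \<Longrightarrow> adj_step n q p"
  unfolding adj_step_def by (metis left_adj_left_adj)

lemma is_perm_left_adj:
  assumes p: "is_perm n p" and k: "1 \<le> k" "k < n"
  shows "is_perm n (left_adj k p)"
proof -
  define sw where "sw = (\<lambda>v. if v = k then k + 1 else if v = k + 1 then k else v)"
  have sub: "sw ` {1..n} \<subseteq> {1..n}" using k by (auto simp: sw_def)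
  have "v \<in> sw ` {1..n}" if "v \<in> {1..n}" for v
  proof (rule rev_image_eqI)
    show "sw v \<in> {1..n}" using sub that by blast
    show "v = sw (sw v)" by (simp add: sw_def)
  qed
  then have "sw ` {1..n} = {1..n}" using sub by blast
  then show ?thesis
    using p distinct_left_adj[of p k] unfolding is_perm_def left_adj_def sw_def[symmetric]
    by simp
qed

lemma is_perm_nth:
  assumes "is_perm n p" and "i < n"
  shows "1 \<le> p ! i \<and> p ! i \<le> n"
  using assms nth_mem[of i p] unfolding is_perm_def by fastforce

lemma is_perm_inversion_precedes:
  assumes p: "is_perm n p" and ij: "i < j" "j < n" and inv: "p ! j < p ! i"
  shows "\<exists>k. precedes p (Suc k) k"
  using ij inv
proof (induction "p ! i - p ! j" arbitrary: i j rule: less_induct)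
  case less
  have len: "length p = n" using p by (simp add: is_perm_def)
  have "Suc (p ! j) \<le> n" using is_perm_nth[OF p, of i] less.prems by simp
  then have "Suc (p ! j) \<in> set p" using p by (simp add: is_perm_def)
  then obtain l where l: "l < n" "p ! l = Suc (p ! j)" using len by (auto simp: in_set_conv_nth)
  show ?case
  proof (cases "p ! i = Suc (p ! j)")
    case True
    then show ?thesis using less.prems len unfolding precedes_def by metis
  next
    case False
    show ?thesis
    proof (cases "l < j")
      case True
      then show ?thesis using less.prems len l unfolding precedes_def by metis
    next
      case False
      then have "j < l" using l by (metis lessI less_irrefl nat_neq_iff)
      moreover have "Suc (p ! j) < p ! i" using \<open>p ! i \<noteq> Suc (p ! j)\<close> less.prems by simp
      ultimately show ?thesis using less.hyps[of i l] less.prems l by simp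
    qed
  qed
qed

lemma is_perm_inversion:
  assumes p: "is_perm n p" and ne: "p \<noteq> [1..<Suc n]"
  shows "\<exists>i j. i < j \<and> j < n \<and> p ! j < p ! i"
proof (rule ccontr)
  assume no_inv: "\<not> ?thesis"
  have len: "length p = n" and d: "distinct p" using p by (simp_all add: is_perm_def)
  have "sorted_wrt (<) p"
    unfolding sorted_wrt_iff_nth_less
  proof (intro allI impI)
    fix i j assume ij: "i < j" "j < length p"
    then have "p ! i \<noteq> p ! j" using d nth_eq_iff_index_eq by fastforce
    moreover have "\<not> p ! j < p ! i" using no_inv ij len by blast
    ultimately show "p ! i < p ! j" by simp
  qed
  moreover have "set [1..<Suc n] = {1..n}"
    by (simp only: set_upt atLeastLessThanSuc_atLeastAtMost)
  then have "set p = set [1..<Suc n]" using p by (simp add: is_perm_def)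
  ultimately have "p = [1..<Suc n]"
    using d by (intro sorted_distinct_set_unique) (simp_all add: strict_sorted_iff del: upt_Suc)
  with ne show False by simp
qed

text \<open>Exchanging the values \<open>k + 1\<close> and \<open>k\<close> when \<open>k + 1\<close> comes first increases this weight, so
  the walk towards the identity terminates.\<close>

definition position_weight :: "nat list \<Rightarrow> nat" where
  "position_weight p = (\<Sum>l<length p. l * p ! l)"

lemma position_weight_left_adj:
  assumes d: "distinct p" and ij: "i < j" "j < length p" and p: "p ! i = Suc k" "p ! j = k"
  shows "position_weight (left_adj k p) + i = position_weight p + j"
proof -
  have "l * left_adj k p ! l + (if l = i then l else 0) = l * p ! l + (if l = j then l else 0)"
    if l: "l < length p" for l
  proof -
    have "p ! l \<noteq> k \<and> p ! l \<noteq> Suc k" if "l \<noteq> i" "l \<noteq> j"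
      using that d l ij p nth_eq_iff_index_eq by (metis less_trans)
    then show ?thesis using l ij p by (auto simp: nth_left_adj)
  qed
  then have "(\<Sum>l<length p. l * left_adj k p ! l + (if l = i then l else 0)) =
             (\<Sum>l<length p. l * p ! l + (if l = j then l else 0))"
    by (intro sum.cong) simp_all
  then show ?thesis using ij by (simp add: position_weight_def sum.distrib)
qed

lemma position_weight_le:
  assumes "is_perm n p"
  shows "position_weight p \<le> n * (n * n)"
proof -
  have "l * p ! l \<le> n * n" if "l \<in> {..<length p}" for l
    using that assms is_perm_nth[OF assms, of l] by (simp add: is_perm_def mult_le_mono)
  then have "position_weight p \<le> (\<Sum>l<length p. n * n)"
    unfolding position_weight_def by (rule sum_mono)
  then show ?thesis using assms by (simp add: is_perm_def)
qed

lemma is_perm_reaches_identity: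
  assumes "is_perm n p"
  shows "(adj_step n)\<^sup>*\<^sup>* p [1..<Suc n]"
  using assms
proof (induction "n * (n * n) - position_weight p" arbitrary: p rule: less_induct)
  case less
  show ?case
  proof (cases "p = [1..<Suc n]")
    case False
    obtain i j where "i < j" "j < n" "p ! j < p ! i"
      using is_perm_inversion[OF less.prems False] by blast
    then obtain k i' j' where ij: "i' < j'" "j' < length p" "p ! i' = Suc k" "p ! j' = k"
      using is_perm_inversion_precedes[OF less.prems] unfolding precedes_def by blast
    have len: "length p = n" using less.prems by (simp add: is_perm_def)
    have k: "1 \<le> k" "k < n"
      using is_perm_nth[OF less.prems, of j'] is_perm_nth[OF less.prems, of i'] ij len by auto
    have step: "adj_step n p (left_adj k p)" unfolding adj_step_def using k by blast
    have perm: "is_perm n (left_adj k p)" using is_perm_left_adj[OF less.prems k] .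
    have "position_weight (left_adj k p) + i' = position_weight p + j'"
      using position_weight_left_adj[of p i' j' k] less.prems ij by (simp add: is_perm_def)
    then have "n * (n * n) - position_weight (left_adj k p) < n * (n * n) - position_weight p"
      using position_weight_le[OF perm] ij(1) by linarith
    then show ?thesis using less.hyps[OF _ perm] step by (meson converse_rtranclp_into_rtranclp)
  qed simp
qed

lemma adj_step_path_exists:
  assumes "is_perm n p" and "is_perm n q"
  shows "\<exists>m. (adj_step n ^^ m) p q"
proof -
  have "symp (adj_step n)" by (blast intro: sympI adj_step_sym)
  then have "(adj_step n)\<^sup>*\<^sup>* [1..<Suc n] q"
    using is_perm_reaches_identity[OF assms(2)] by (blast dest: sympD[OF symp_rtranclp])
  then have "(adj_step n)\<^sup>*\<^sup>* p q"
    using is_perm_reaches_identity[OF assms(1)] by (rule rtranclp_trans[rotated])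
  then show ?thesis by (rule rtranclp_imp_relpowp)
qed

section \<open>Blocks\<close>

lemma finite_row_interval:
  assumes "row_interval J" and "finite J"
  obtains a b where "J = {a..<b}"
proof (cases "J = {}")
  case False
  have "J = {Min J..<Suc (Max J)}"
  proof
    show "J \<subseteq> {Min J..<Suc (Max J)}"
      using Min_le[OF assms(2)] Max_ge[OF assms(2)] by (simp add: subset_eq less_Suc_eq_le)
    show "{Min J..<Suc (Max J)} \<subseteq> J"
    proof
      fix j assume "j \<in> {Min J..<Suc (Max J)}"
      then have "Min J \<le> j" "j \<le> Max J" by simp_all
      then show "j \<in> J"
        using assms(1) Min_in[OF assms(2) False] Max_in[OF assms(2) False]
        unfolding row_interval_def by blast
    qed
  qed
  then show ?thesis using that by blast
qed (use that in auto)

lemma lam_block_rows: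
  assumes "lam_block lf mf B" and "\<And>j. N \<le> j \<Longrightarrow> lf j = 0"
  obtains a b where "B = {(j, c) \<in> diagram lf - diagram mf. j \<in> {a..<b}}"
    "\<And>j. j \<in> {a..<b} \<Longrightarrow> mf j \<le> lf j"
proof -
  obtain I where I: "row_interval I" "\<forall>j\<in>I. \<not> lf j < mf j"
    and B: "B = {(j, c) \<in> diagram lf - diagram mf. j \<in> I}"
    using assms(1) unfolding lam_block_def by blast
  have "row_interval (I \<inter> {..<N})" using I(1) unfolding row_interval_def by auto
  then obtain a b where ab: "I \<inter> {..<N} = {a..<b}" using finite_row_interval by blast
  have "j < N" if "c < lf j" for j c using assms(2)[of j] that by (cases "N \<le> j") auto
  then have "B = {(j, c) \<in> diagram lf - diagram mf. j \<in> {a..<b}}"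
    unfolding B ab[symmetric] diagram_def by auto
  moreover have "mf j \<le> lf j" if "j \<in> {a..<b}" for j
    using I(2) that ab[symmetric] by auto
  ultimately show ?thesis using that by blast
qed

lemma card_diagram_diff_rows:
  assumes "\<And>j. j \<in> {a..<b} \<Longrightarrow> mf j \<le> lf j"
  shows "card {(j, c) \<in> diagram lf - diagram mf. j \<in> {a..<b}} + (\<Sum>j\<in>{a..<b}. mf j) =
         (\<Sum>j\<in>{a..<b}. lf j)"
proof -
  have "{(j, c) \<in> diagram lf - diagram mf. j \<in> {a..<b}} = Sigma {a..<b} (\<lambda>j. {mf j..<lf j})"
    by (auto simp: diagram_def)
  then have "card {(j, c) \<in> diagram lf - diagram mf. j \<in> {a..<b}} = (\<Sum>j\<in>{a..<b}. lf j - mf j)"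
    by simp
  then show ?thesis using assms by (simp add: sum.distrib[symmetric])
qed

lemma card_lam_block_le:
  assumes "lam_block lf mf B" and "\<And>j. N \<le> j \<Longrightarrow> lf j = 0"
    and "\<And>a b. (\<Sum>j\<in>{a..<b}. lf j) \<le> (\<Sum>j\<in>{a..<b}. mf j) + t"
  shows "card B \<le> t"
proof -
  obtain a b where B: "B = {(j, c) \<in> diagram lf - diagram mf. j \<in> {a..<b}}"
    and le: "\<And>j. j \<in> {a..<b} \<Longrightarrow> mf j \<le> lf j"
    using lam_block_rows[OF assms(1,2)] by blast
  show ?thesis
    using card_diagram_diff_rows[of a b mf lf, OF le] assms(3)[of a b] unfolding B by linarith
qed

lemma rsk_shape_eq_0: "length (rsk_P w) \<le> j \<Longrightarrow> rsk_shape w j = 0"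
  by (simp add: rsk_shape_def Let_def)

theorem proposition4:
  fixes n t :: nat and pi tau :: "nat list" and B :: "(nat \<times> nat) set"
  assumes "is_perm n pi" and "is_perm n tau"
    and "perm_dist n pi tau = t"
    and "is_block (rsk_shape pi) (rsk_shape tau) B"
  shows "card B \<le> t"
proof -
  have "(adj_step n ^^ t) pi tau"
    using LeastI_ex[OF adj_step_path_exists[OF assms(1,2)]] assms(3)
    unfolding perm_dist_def by simp
  then have window:
    "(\<Sum>j\<in>{a..<b}. rsk_shape pi j) \<le> (\<Sum>j\<in>{a..<b}. rsk_shape tau j) + t"
    "(\<Sum>j\<in>{a..<b}. rsk_shape tau j) \<le> (\<Sum>j\<in>{a..<b}. rsk_shape pi j) + t" for a b
    using shape_window_adj_step_path assms(1) unfolding is_perm_def by blast+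
  from assms(4) show ?thesis
    unfolding is_block_def
    using card_lam_block_le[OF _ rsk_shape_eq_0 window(1)]
      card_lam_block_le[OF _ rsk_shape_eq_0 window(2)]
    by blast
qed

end
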